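(* Let $G$ be a connected simple graph without bridges whose edge set is identified with $[d+1]$, let $B_1,\dots,B_n$ be the bases (spanning trees) of its graphic matroid, all of cardinality $k$, and let $P=\operatorname{tconv}(V)$ with $V=(-e_{B_1},\dots,-e_{B_n})$. Then the origin $\mathbf{0}\in\mathbb{T}^d$ lies in $P$, and $\operatorname{type}_V(\mathbf{0})=(T^{(0)}_1,\dots,T^{(0)}_{d+1})$ with $T^{(0)}_i=\{j\in[n]: i\in B_j\}$.
   Context: Tropical arithmetic is min-plus; $\mathbb{T}^d=\mathbb{R}^{d+1}/\mathbb{R}(1,\dots,1)$; $\operatorname{tconv}\{v_1,\dots,v_n\}=\{\bigoplus_l\lambda_l\odot v_l:\lambda_l\in\mathbb{R}\}$; $e_B=\sum_{i\in B}e_i$. For $m\in[d+1]$ let $\bar S_m=\{\xi\in\mathbb{T}^d:\xi_m=\min_i\xi_i\}$. For $V=(v_1,\dots,v_n)$ and $x\in\mathbb{T}^d$, $\operatorname{type}_V(x)=(T_1,\dots,T_{d+1})$ with $T_m=\{l\in[n]:v_l\in x+\bar S_m\}$. *)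

theory Defs
  imports Complex_Main
begin

text \<open>A point of T^d = R^(d+1)/R(1,...,1) is represented by a function nat => real,
  of which only the coordinates 1..d+1 matter.  The tropical convex hull of
  v_1..v_n consists of all classes of (min_l (lambda_l + v_l i))_i; since the
  lambda_l range over all reals, a representative x lies in the hull iff it is
  of this form exactly.\<close>

definition tconv_mem :: "nat \<Rightarrow> nat \<Rightarrow> (nat \<Rightarrow> nat \<Rightarrow> real) \<Rightarrow> (nat \<Rightarrow> real) \<Rightarrow> bool" where
  "tconv_mem d n v x \<longleftrightarrow>
     (\<exists>lam :: nat \<Rightarrow> real. \<forall>i\<in>{1..d+1}. x i = (MIN l\<in>{1..n}. lam l + v l i))"

definition in_sector :: "nat \<Rightarrow> nat \<Rightarrow> (nat \<Rightarrow> real) \<Rightarrow> bool" where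
  "in_sector d m \<xi> \<longleftrightarrow> \<xi> m = (MIN i\<in>{1..d+1}. \<xi> i)"

definition ttype :: "nat \<Rightarrow> nat \<Rightarrow> (nat \<Rightarrow> nat \<Rightarrow> real) \<Rightarrow> (nat \<Rightarrow> real) \<Rightarrow> nat \<Rightarrow> nat set" where
  "ttype d n v x m = {l\<in>{1..n}. in_sector d m (\<lambda>i. v l i - x i)}"

definition joined :: "'a set set \<Rightarrow> 'a \<Rightarrow> 'a \<Rightarrow> bool" where
  "joined F u w \<longleftrightarrow> (u, w) \<in> {(x, y). \<exists>e\<in>F. e = {x, y}}\<^sup>*"

definition connected_on :: "'a set \<Rightarrow> 'a set set \<Rightarrow> bool" where
  "connected_on Vs F \<longleftrightarrow> Vs \<noteq> {} \<and> (\<forall>u\<in>Vs. \<forall>w\<in>Vs. joined F u w)"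

definition simple_graph_lab :: "'a set \<Rightarrow> nat \<Rightarrow> (nat \<Rightarrow> 'a set) \<Rightarrow> bool" where
  "simple_graph_lab Vs d E \<longleftrightarrow> finite Vs \<and> inj_on E {1..d+1} \<and>
     (\<forall>i\<in>{1..d+1}. E i \<subseteq> Vs \<and> card (E i) = 2)"

definition is_bridge :: "'a set \<Rightarrow> nat \<Rightarrow> (nat \<Rightarrow> 'a set) \<Rightarrow> nat \<Rightarrow> bool" where
  "is_bridge Vs d E i \<longleftrightarrow> i \<in> {1..d+1} \<and> \<not> connected_on Vs (E ` ({1..d+1} - {i}))"

definition graphic_indep :: "nat \<Rightarrow> (nat \<Rightarrow> 'a set) \<Rightarrow> nat set \<Rightarrow> bool" where
  "graphic_indep d E B \<longleftrightarrow> B \<subseteq> {1..d+1} \<and>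
     (\<forall>i\<in>B. \<forall>u w. E i = {u, w} \<longrightarrow> \<not> joined (E ` (B - {i})) u w)"

definition graphic_basis :: "nat \<Rightarrow> (nat \<Rightarrow> 'a set) \<Rightarrow> nat set \<Rightarrow> bool" where
  "graphic_basis d E B \<longleftrightarrow> graphic_indep d E B \<and>
     (\<forall>B'. graphic_indep d E B' \<and> B \<subseteq> B' \<longrightarrow> B' = B)"

end

theory Submission
  imports Defs
begin

text \<open>Since the graph has no loops, every single edge is a forest, so every edge lies in
  some spanning tree; hence with all coefficients equal to \<open>1\<close> every coordinate of
  \<open>min\<^sub>l (1 - e\<^bsub>B\<^sub>l\<^esub>)\<close> is \<open>0\<close>. Every spanning tree is nonempty, so the minimum of
  \<open>-e\<^bsub>B\<^esub>\<close> is \<open>-1\<close>, attained exactly on \<open>B\<close>, which gives the type.\<close>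

lemma joined_empty_iff: "joined {} u w \<longleftrightarrow> u = w"
  unfolding joined_def by simp

lemma graphic_indep_singleton:
  assumes "simple_graph_lab Vs d E" "i \<in> {1..d+1}"
  shows "graphic_indep d E {i}"
proof -
  have "card (E i) = 2" using assms unfolding simple_graph_lab_def by auto
  then have "E i = {u, w} \<Longrightarrow> u \<noteq> w" for u w by auto
  with assms(2) show ?thesis
    unfolding graphic_indep_def by (simp add: joined_empty_iff)
qed

lemma graphic_basis_subset: "graphic_basis d E B \<Longrightarrow> B \<subseteq> {1..d+1}"
  unfolding graphic_basis_def graphic_indep_def by blast

lemma graphic_indep_extends_to_basis:
  assumes "graphic_indep d E A"
  obtains B where "graphic_basis d E B" "A \<subseteq> B"
proof -
  let ?I = "{B. graphic_indep d E B}"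
  have "finite ?I"
    by (rule finite_subset[of _ "Pow {1..d+1}"]) (auto simp: graphic_indep_def)
  from finite_has_maximal2[OF this] assms obtain B
    where "B \<in> ?I" "A \<subseteq> B" "\<forall>B'\<in>?I. B \<subseteq> B' \<longrightarrow> B = B'"
    by blast
  then have "graphic_basis d E B"
    unfolding graphic_basis_def by auto
  then show ?thesis using \<open>A \<subseteq> B\<close> by (rule that)
qed

lemma edge_in_graphic_basis:
  assumes "simple_graph_lab Vs d E" "i \<in> {1..d+1}"
  obtains B where "graphic_basis d E B" "i \<in> B"
  using graphic_indep_extends_to_basis[OF graphic_indep_singleton[OF assms]] by blast

lemma graphic_basis_nonempty:
  assumes "simple_graph_lab Vs d E" "graphic_basis d E B"
  shows "B \<noteq> {}"
proof
  assume "B = {}"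
  with assms(2) graphic_indep_singleton[OF assms(1), of 1] show False
    unfolding graphic_basis_def by auto
qed

lemma tconv_mem_zero_neg_indicators:
  assumes "\<forall>i\<in>{1..d+1}. \<exists>j\<in>{1..n}. i \<in> S j"
  shows "tconv_mem d n (\<lambda>l i. - (if i \<in> S l then 1 else 0)) (\<lambda>_. 0)"
  unfolding tconv_mem_def
proof (intro exI[of _ "\<lambda>_. 1"] ballI)
  fix i assume "i \<in> {1..d+1}"
  with assms obtain j where "j \<in> {1..n}" "i \<in> S j" by blast
  then have "(MIN l\<in>{1..n}. 1 + - (if i \<in> S l then 1 else 0)) = (0::real)"
    by (intro Min_eqI) auto
  then show "0 = (MIN l\<in>{1..n}. 1 + - (if i \<in> S l then 1 else 0 :: real))" by simp
qed

lemma ttype_zero_neg_indicators: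
  assumes "\<forall>j\<in>{1..n}. S j \<inter> {1..d+1} \<noteq> {}" "i \<in> {1..d+1}"
  shows "ttype d n (\<lambda>l i. - (if i \<in> S l then 1 else 0)) (\<lambda>_. 0) i = {j\<in>{1..n}. i \<in> S j}"
proof -
  have "(MIN i'\<in>{1..d+1}. - (if i' \<in> S l then 1 else 0) - 0) = (-1::real)"
    if "l \<in> {1..n}" for l
  proof -
    from assms(1) that obtain i' where "i' \<in> S l" "i' \<in> {1..d+1}" by blast
    then show ?thesis by (intro Min_eqI) auto
  qed
  then show ?thesis
    unfolding ttype_def in_sector_def by auto
qed

theorem mainTheorem5:
  fixes Vs :: "'a set" and d n k :: nat and E :: "nat \<Rightarrow> 'a set"
    and Bs :: "nat \<Rightarrow> nat set" and v :: "nat \<Rightarrow> nat \<Rightarrow> real"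
  assumes "simple_graph_lab Vs d E"
    and "connected_on Vs (E ` {1..d+1})"
    and "\<forall>i\<in>{1..d+1}. \<not> is_bridge Vs d E i"
    and "bij_betw Bs {1..n} {B. graphic_basis d E B}"
    and "\<forall>j\<in>{1..n}. card (Bs j) = k"
    and "\<forall>l i. v l i = - (if i \<in> Bs l then 1 else 0)"
  shows "tconv_mem d n v (\<lambda>_. 0)
    \<and> (\<forall>i\<in>{1..d+1}. ttype d n v (\<lambda>_. 0) i = {j\<in>{1..n}. i \<in> Bs j})"
proof -
  have v: "v = (\<lambda>l i. - (if i \<in> Bs l then 1 else 0))"
    using assms(6) by (intro ext) simp
  have bases: "Bs ` {1..n} = {B. graphic_basis d E B}"
    using assms(4) by (simp add: bij_betw_def)
  have "\<exists>j\<in>{1..n}. i \<in> Bs j" if "i \<in> {1..d+1}" for i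
    using edge_in_graphic_basis[OF assms(1) that] bases
    by (metis (mono_tags, lifting) imageE mem_Collect_eq)
  moreover have "Bs j \<inter> {1..d+1} \<noteq> {}" if "j \<in> {1..n}" for j
  proof -
    have "graphic_basis d E (Bs j)" using bases that by blast
    then show ?thesis
      using graphic_basis_nonempty[OF assms(1)] graphic_basis_subset by blast
  qed
  ultimately show ?thesis
    unfolding v by (simp add: tconv_mem_zero_neg_indicators ttype_zero_neg_indicators)
qed

end
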